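(* Let $\alpha\in(0,1)$, $a_1,a_2\in\mathbb{R}$, and let $A$ be the $N\times N$ matrix defined below with $a_0=a_2$ (symmetric case). Let $R_N$ denote the set of points $(a_2,a_1)\in\mathbb{R}^2$ for which every eigenvalue $\lambda$ of $A$ (all of which are real) satisfies $1-2^{\alpha}<\lambda<1$. Then: (i) if $N\ge 2$ is even, $R_N$ is the open interior of the quadrilateral with vertices $Q_1=(0,1)$, $Q_2=\left(-2^{\alpha-2},\,2^{\alpha-1}+1-2^{\alpha}\right)$, $Q_3=(0,1-2^{\alpha})$, $Q_4=\left(2^{\alpha-2},\,1-2^{\alpha-1}\right)$; (ii) if $N\ge 3$ is odd, $R_N$ is the open interior of the quadrilateral with vertices $Q_1=(0,1)$, $Q_2'=\left(-\frac{2^{\alpha-1}}{1+\cos(\pi/N)},\,\frac{2^{\alpha}}{1+\cos(\pi/N)}+1-2^{\alpha}\right)$, $Q_3=(0,1-2^{\alpha})$, $Q_4'=\left(\frac{2^{\alpha-1}}{1+\cos(\pi/N)},\,1-\frac{2^{\alpha}}{1+\cos(\pi/N)}\right)$. (Here points are written in the $a_2a_1$-plane, first coordinate $a_2$, second coordinate $a_1$.) Consequently $R_N$ is the stable region of the zero solution of the linear fractional coupled map lattice with this $A$.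
   Context: Fractional-order linear coupled map lattice: for $\alpha\in(0,1)$, $X_{t+1}=X_0+\sum_{j=0}^{t}\frac{\Gamma(t-j+\alpha)}{\Gamma(\alpha)\Gamma(t-j+1)}(A-I)X_j$, $X_t\in\mathbb{R}^N$. Connectivity matrix for $N\ge 3$: $A$ is the $N\times N$ circulant matrix with $A_{k,k}=a_1$, $A_{k,k+1}=a_2$, $A_{k,k-1}=a_0$ (indices taken modulo $N$, i.e. periodic boundary conditions: $A_{1,N}=a_0$, $A_{N,1}=a_2$), all other entries $0$; for $N=2$, $A=\begin{pmatrix}a_1&a_0+a_2\\ a_0+a_2&a_1\end{pmatrix}$; for $N=1$, $A=(a_0+a_1+a_2)$. Stability criterion used to define "stable region": the zero solution is asymptotically stable exactly when every eigenvalue of $A$ lies in the open region enclosed by the curve $\beta(t)=1+e^{it}(1-e^{-it})^{\alpha}$, $0\le t\le 2\pi$ (principal branch), and a real number lies in this region iff it lies in $(1-2^{\alpha},1)$. *)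

theory Defs
  imports "HOL-Analysis.Analysis" "Jordan_Normal_Form.Char_Poly"
begin

text \<open>Connectivity matrix A of the coupled map lattice (0-based indices, periodic boundary).\<close>
definition cml_matrix :: "nat \<Rightarrow> real \<Rightarrow> real \<Rightarrow> real \<Rightarrow> real mat" where
  "cml_matrix N a0 a1 a2 =
     (if N = 1 then mat 1 1 (\<lambda>_. a0 + a1 + a2)
      else if N = 2 then mat 2 2 (\<lambda>(i,j). if i = j then a1 else a0 + a2)
      else mat N N (\<lambda>(i,j). if j = i then a1
                            else if j = (i + 1) mod N then a2
                            else if i = (j + 1) mod N then a0
                            else 0))"

definition region_R :: "real \<Rightarrow> nat \<Rightarrow> (real \<times> real) set" where
  "region_R \<alpha> N = {(a2, a1). \<forall>ev::complex.
      eigenvalue (map_mat complex_of_real (cml_matrix N a2 a1 a2)) ev \<longrightarrow>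
        ev \<in> \<real> \<and> 1 - 2 powr \<alpha> < Re ev \<and> Re ev < 1}"

end

theory Submission
  imports Defs
begin

text \<open>The matrix \<open>A\<close> is circulant, so for every \<open>N\<close>-th root of unity \<open>z\<close> the vector
  \<open>(z^j)\<^sub>j\<close> is an eigenvector with eigenvalue \<open>a\<^sub>0/z + a\<^sub>1 + a\<^sub>2 z\<close>. There are no other eigenvalues:
  pairing an eigenvector \<open>v\<close> with \<open>(w^j)\<^sub>j\<close> shows that, away from these values, the polynomial
  \<open>\<Sum>\<^sub>j v\<^sub>j x^j\<close> of degree \<open>< N\<close> vanishes at all \<open>N\<close> roots of unity, hence \<open>v = 0\<close>.
  For \<open>a\<^sub>0 = a\<^sub>2\<close> the spectrum is \<open>{a\<^sub>1 + 2 a\<^sub>2 cos(2\<pi>k/N)}\<close>, so \<open>(a\<^sub>2, a\<^sub>1) \<in> R\<^sub>N\<close> iff the affine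
  function \<open>c \<mapsto> a\<^sub>1 + 2 a\<^sub>2 c\<close> lies in \<open>(1 - 2^\<alpha>, 1)\<close> at the extreme cosines \<open>1\<close> and \<open>-m\<close>, where
  \<open>m = 1\<close> for even \<open>N\<close> and \<open>m = cos(\<pi>/N)\<close> for odd \<open>N\<close>. The linear map
  \<open>(a\<^sub>2, a\<^sub>1) \<mapsto> (a\<^sub>1 + 2 a\<^sub>2, a\<^sub>1 - 2 m a\<^sub>2)\<close> carries this set onto the open square \<open>(1 - 2^\<alpha>, 1)\<^sup>2\<close>,
  whose corners come from the four vertices of the quadrilateral.\<close>

lemma eq_mod_succ_iff_eq_mod_pred:
  fixes i j N :: nat
  assumes "i < N" "j < N"
  shows "i = (j + 1) mod N \<longleftrightarrow> j = (i + N - 1) mod N"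
  using assms by (cases "j + 1 = N"; cases "i = 0") (auto simp: mod_if)

lemma sum_lessThan_shift_mod:
  fixes N s :: nat
  assumes "N > 0"
  shows "(\<Sum>j<N. f ((j + s) mod N)) = (\<Sum>j<N. f j)"
proof -
  have "inj_on (\<lambda>j. (j + s) mod N) {..<N}"
  proof (rule inj_onI)
    fix j k assume "j \<in> {..<N}" "k \<in> {..<N}" "(j + s) mod N = (k + s) mod N"
    then have "N dvd nat \<bar>int (j + s) - int (k + s)\<bar>" by (simp only: mod_eq_iff_dvd_symdiff_nat)
    then have "j mod N = k mod N" by (simp add: mod_eq_iff_dvd_symdiff_nat)
    then show "j = k" using \<open>j \<in> {..<N}\<close> \<open>k \<in> {..<N}\<close> by simp
  qed
  then have "bij_betw (\<lambda>j. (j + s) mod N) {..<N} {..<N}"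
    using assms by (simp add: bij_betw_def endo_inj_surj image_subset_iff)
  then show ?thesis by (rule sum.reindex_bij_betw)
qed

lemma power_mod_eq_if_power_eq_1:
  fixes z :: "'a::monoid_mult"
  assumes "z ^ N = 1"
  shows "z ^ (m mod N) = z ^ m"
proof -
  have "z ^ m = (z ^ N) ^ (m div N) * z ^ (m mod N)"
    by (metis div_mult_mod_eq power_add power_mult mult.commute)
  then show ?thesis using assms by simp
qed

lemma power_mod_mult_complement:
  fixes z :: "'a::monoid_mult"
  assumes "z ^ N = 1" "s + t = N"
  shows "z ^ ((j + s) mod N) * z ^ t = z ^ j"
proof -
  have "z ^ ((j + s) mod N) * z ^ t = z ^ (j + N)"
    using assms by (simp add: power_mod_eq_if_power_eq_1 add.assoc flip: power_add)
  then show ?thesis using assms(1) by (simp add: power_add)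
qed

lemma power_pred_eq_inverse:
  fixes z :: "'a::field"
  assumes "N > 0" "z ^ N = 1"
  shows "z ^ (N - 1) = inverse z"
proof -
  have "z * z ^ (N - 1) = 1"
    using assms by (metis Suc_diff_1 power_Suc)
  then show ?thesis by (rule inverse_unique[symmetric])
qed

lemma coeffs_eq_0_if_power_sums_vanish:
  fixes f :: "nat \<Rightarrow> 'a::idom"
  assumes "card A \<ge> N" and "\<And>w. w \<in> A \<Longrightarrow> (\<Sum>j<N. f j * w ^ j) = 0" and "l < N"
  shows "f l = 0"
proof -
  define p where "p = (\<Sum>j<N. monom (f j) j)"
  have "degree p < N"
    using assms(3) by (intro degree_lessI) (auto simp: p_def coeff_sum coeff_monom)
  moreover have "poly p w = poly 0 w" if "w \<in> A" for w
    using assms(2)[OF that] by (simp add: p_def poly_sum poly_monom)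
  ultimately have "p = 0"
    using assms(1,3) by (intro poly_eqI_degree[of A]) auto
  then have "coeff p l = 0" by simp
  then show ?thesis using assms(3) by (simp add: p_def coeff_sum coeff_monom)
qed

lemma affine_in_interval_iff_endpoints:
  fixes a b lo hi L U :: real
  assumes "C \<subseteq> {lo..hi}" "lo \<in> C" "hi \<in> C"
  shows "(\<forall>c\<in>C. L < a + b * c \<and> a + b * c < U) \<longleftrightarrow>
    L < a + b * lo \<and> a + b * lo < U \<and> L < a + b * hi \<and> a + b * hi < U"
proof
  assume ends: "L < a + b * lo \<and> a + b * lo < U \<and> L < a + b * hi \<and> a + b * hi < U"
  show "\<forall>c\<in>C. L < a + b * c \<and> a + b * c < U"
  proof
    fix c assume "c \<in> C"
    then have "lo \<le> c" "c \<le> hi" using assms(1) by auto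
    then have "b * lo \<le> b * c \<and> b * c \<le> b * hi \<or> b * hi \<le> b * c \<and> b * c \<le> b * lo"
      by (cases "b \<ge> 0") (auto intro: mult_left_mono mult_left_mono_neg)
    with ends show "L < a + b * c \<and> a + b * c < U" by auto
  qed
qed (use assms(2,3) in blast)

lemma cos_two_pi_div_half_even:
  assumes "even N" "N > 0"
  shows "cos (2 * pi * real (N div 2) / real N) = -1"
proof -
  have "2 * pi * real (N div 2) / real N = pi"
    using assms by (simp add: real_of_nat_div)
  then show ?thesis by simp
qed

lemma cos_two_pi_div_half_odd:
  assumes "odd N"
  shows "cos (2 * pi * real (N div 2) / real N) = - cos (pi / real N)"
proof -
  have half: "2 * real (N div 2) = real N - 1"
    using odd_two_times_div_two_nat[OF assms] odd_pos[OF assms] by (simp add: of_nat_diff)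
  have "2 * pi * real (N div 2) / real N = pi * (2 * real (N div 2)) / real N" by simp
  also have "\<dots> = pi * (real N - 1) / real N" unfolding half ..
  also have "\<dots> = pi - pi / real N"
    using odd_pos[OF assms] by (simp add: field_simps)
  finally show ?thesis by simp
qed

lemma cos_two_pi_div_ge_neg_cos_pi_div:
  assumes "odd N" "k < N"
  shows "- cos (pi / real N) \<le> cos (2 * pi * real k / real N)"
proof -
  have N: "real N > 0" using assms by simp
  have lower_half: "- cos (pi / real N) \<le> cos (2 * pi * real j / real N)" if "2 * j < N" for j
  proof -
    have "2 * real j + 1 \<le> real N" using that by linarith
    then have "2 * pi * real j / real N \<le> pi - pi / real N"
      using N by (simp add: field_simps) (metis mult_left_mono pi_ge_zero distrib_left mult_1_right)
    then have "cos (pi - pi / real N) \<le> cos (2 * pi * real j / real N)"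
      using N by (intro cos_monotone_0_pi_le) (auto simp: field_simps)
    then show ?thesis by simp
  qed
  show ?thesis
  proof (cases "2 * k < N")
    case True
    then show ?thesis by (rule lower_half)
  next
    case False
    with assms have "2 * (N - k) < N" by presburger
    moreover have "2 * pi * real (N - k) / real N = 2 * pi - 2 * pi * real k / real N"
      using assms N by (simp add: of_nat_diff field_simps)
    ultimately show ?thesis using lower_half[of "N - k"] by simp
  qed
qed

lemma interior_convex_hull_linear_image_square:
  fixes g :: "real \<times> real \<Rightarrow> real \<times> real"
  assumes "linear g" "inj g" "L \<le> U"
  shows "interior (convex hull (g ` ({L, U} \<times> {L, U}))) = g ` ({L<..<U} \<times> {L<..<U})"
proof -
  have square: "convex hull ({L, U} \<times> {L, U}) = {L..U} \<times> {L..U}"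
    unfolding convex_hull_Times segment_convex_hull[symmetric] closed_segment_eq_real_ivl
    using assms(3) by simp
  show ?thesis
    unfolding convex_hull_linear_image[OF assms(1), symmetric]
      interior_injective_linear_image[OF assms(1,2)] square interior_Times
    by simp
qed

lemma interior_quadrilateral_eq:
  fixes m d :: real
  assumes "m > -1" "d \<ge> 0"
  shows "interior (convex hull {(0, 1), (- (d / (2 * (1 + m))), d / (1 + m) + 1 - d), (0, 1 - d),
      (d / (2 * (1 + m)), 1 - d / (1 + m))}) =
    {(a2, a1). 1 - d < a1 + 2 * a2 \<and> a1 + 2 * a2 < 1 \<and> 1 - d < a1 - 2 * m * a2 \<and> a1 - 2 * m * a2 < 1}"
proof -
  define T :: "real \<times> real \<Rightarrow> real \<times> real" where
    "T = (\<lambda>(a2, a1). (a1 + 2 * a2, a1 - 2 * m * a2))"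
  define c where "c = 1 / (2 * (1 + m))"
  define g :: "real \<times> real \<Rightarrow> real \<times> real" where
    "g = (\<lambda>(x, y). ((x - y) * c, (m * x + y) * (2 * c)))"
  have m: "1 + m \<noteq> 0" using assms(1) by simp
  then have c: "2 * c * (1 + m) = 1" by (simp add: c_def)
  have g_T: "g (T p) = p" for p
  proof (cases p)
    case (Pair a2 a1)
    have "(a1 + 2 * a2 - (a1 - 2 * m * a2)) * c = a2 * (2 * c * (1 + m))"
      and "(m * (a1 + 2 * a2) + (a1 - 2 * m * a2)) * (2 * c) = a1 * (2 * c * (1 + m))"
      by (simp_all add: algebra_simps)
    then show ?thesis by (simp add: Pair g_def T_def c)
  qed
  have T_g: "T (g p) = p" for p
  proof (cases p)
    case (Pair x y)
    have "(m * x + y) * (2 * c) + 2 * ((x - y) * c) = x * (2 * c * (1 + m))"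
      and "(m * x + y) * (2 * c) - 2 * m * ((x - y) * c) = y * (2 * c * (1 + m))"
      by (simp_all add: algebra_simps)
    then show ?thesis by (simp add: Pair g_def T_def c)
  qed
  have "linear g"
    by (rule linearI) (auto simp: g_def algebra_simps)
  moreover have "inj g" by (metis g_T T_g injI)
  moreover have "{(0, 1), (- (d / (2 * (1 + m))), d / (1 + m) + 1 - d), (0, 1 - d),
      (d / (2 * (1 + m)), 1 - d / (1 + m))} = g ` ({1 - d, 1} \<times> {1 - d, 1})"
    using m by (auto simp: g_def c_def field_simps)
  moreover have "g ` S = {p. T p \<in> S}" for S
  proof
    show "{p. T p \<in> S} \<subseteq> g ` S"
      using g_T by (metis image_eqI mem_Collect_eq subsetI)
  qed (use T_g in auto)
  ultimately show ?thesis
    using interior_convex_hull_linear_image_square[of g "1 - d" 1] assms(2)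
    by (auto simp: T_def)
qed

lemma cml_matrix_carrier: "N > 0 \<Longrightarrow> cml_matrix N a0 a1 a2 \<in> carrier_mat N N"
  by (auto simp: cml_matrix_def)

lemma cml_matrix_entry:
  assumes "N \<ge> 3" "i < N" "j < N"
  shows "cml_matrix N a0 a1 a2 $$ (i, j) =
    (if j = (i + N - 1) mod N then a0 else 0) + (if j = i then a1 else 0)
    + (if j = (i + 1) mod N then a2 else 0)"
  using assms eq_mod_succ_iff_eq_mod_pred[OF assms(2,3)]
  by (auto simp: cml_matrix_def mod_if)

lemma cml_matrix_mult_vec:
  assumes "N > 0" "v \<in> carrier_vec N" "i < N"
  shows "(map_mat complex_of_real (cml_matrix N a0 a1 a2) *\<^sub>v v) $ i =
    of_real a0 * v $ ((i + N - 1) mod N) + of_real a1 * v $ i + of_real a2 * v $ ((i + 1) mod N)"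
proof -
  have "(map_mat complex_of_real (cml_matrix N a0 a1 a2) *\<^sub>v v) $ i =
      (\<Sum>j<N. of_real (cml_matrix N a0 a1 a2 $$ (i, j)) * v $ j)"
    using assms cml_matrix_carrier[OF assms(1), of a0 a1 a2]
    by (auto simp: scalar_prod_def lessThan_atLeast0 mult.commute)
  also have "\<dots> = of_real a0 * v $ ((i + N - 1) mod N) + of_real a1 * v $ i
      + of_real a2 * v $ ((i + 1) mod N)"
  proof -
    consider "N = 1" | "N = 2" | "N \<ge> 3" using assms(1) by linarith
    then show ?thesis
    proof cases
      case 1
      then show ?thesis using assms by (simp add: cml_matrix_def algebra_simps)
    next
      case 2
      then show ?thesis using assms
        by (auto simp: cml_matrix_def numeral_2_eq_2 lessThan_Suc algebra_simps less_Suc_eq)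
    next
      case 3
      then have "(\<Sum>j<N. of_real (cml_matrix N a0 a1 a2 $$ (i, j)) * v $ j) =
          (\<Sum>j<N. (if j = (i + N - 1) mod N then of_real a0 * v $ j else 0)
            + (if j = i then of_real a1 * v $ j else 0)
            + (if j = (i + 1) mod N then of_real a2 * v $ j else 0))"
        using assms by (intro sum.cong) (auto simp: cml_matrix_entry distrib_right)
      then show ?thesis using assms by (simp add: sum.distrib)
    qed
  qed
  finally show ?thesis .
qed

lemma cml_matrix_mult_vec_powers:
  assumes "N > 0" "z ^ N = 1"
  shows "map_mat complex_of_real (cml_matrix N a0 a1 a2) *\<^sub>v vec N (\<lambda>j. z ^ j) =
    (of_real a0 * inverse z + of_real a1 + of_real a2 * z) \<cdot>\<^sub>v vec N (\<lambda>j. z ^ j)"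
proof (rule eq_vecI)
  fix i assume "i < dim_vec ((of_real a0 * inverse z + of_real a1 + of_real a2 * z) \<cdot>\<^sub>v vec N (\<lambda>j. z ^ j))"
  then have i: "i < N" by simp
  have "z ^ ((i + N - 1) mod N) = z ^ i * z ^ (N - 1)"
    using assms by (simp add: power_mod_eq_if_power_eq_1 power_add[symmetric])
  moreover have "z ^ ((i + 1) mod N) = z ^ i * z"
    using assms by (simp add: power_mod_eq_if_power_eq_1)
  ultimately show "(map_mat complex_of_real (cml_matrix N a0 a1 a2) *\<^sub>v vec N (\<lambda>j. z ^ j)) $ i =
      ((of_real a0 * inverse z + of_real a1 + of_real a2 * z) \<cdot>\<^sub>v vec N (\<lambda>j. z ^ j)) $ i"
    using assms i power_pred_eq_inverse[OF assms] by (simp add: cml_matrix_mult_vec algebra_simps)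
qed (use cml_matrix_carrier[OF assms(1), of a0 a1 a2] in auto)

lemma power_sum_cml_matrix_mult_vec:
  assumes "N > 0" "v \<in> carrier_vec N" "w ^ N = 1"
  shows "(\<Sum>j<N. (map_mat complex_of_real (cml_matrix N a0 a1 a2) *\<^sub>v v) $ j * w ^ j) =
    (of_real a0 * w + of_real a1 + of_real a2 * inverse w) * (\<Sum>j<N. v $ j * w ^ j)"
proof -
  have pred: "j + (N - 1) = j + N - 1" for j
    using assms(1) by simp
  have shift_pred: "w ^ ((j + N - 1) mod N) * w = w ^ j" for j
    using power_mod_mult_complement[OF assms(3), of "N - 1" 1 j] assms(1) by (simp add: pred)
  have shift_succ: "w ^ ((j + 1) mod N) * w ^ (N - 1) = w ^ j" for j
    using power_mod_mult_complement[OF assms(3), of 1 "N - 1" j] assms(1) by simp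
  have "(\<Sum>j<N. v $ ((j + N - 1) mod N) * w ^ j) =
      (\<Sum>j<N. v $ ((j + (N - 1)) mod N) * w ^ ((j + (N - 1)) mod N) * w)"
    by (simp only: pred shift_pred mult.assoc)
  also have "\<dots> = (\<Sum>j<N. v $ j * w ^ j * w)"
    by (rule sum_lessThan_shift_mod[OF assms(1), of "\<lambda>l. v $ l * w ^ l * w"])
  finally have sum_pred: "(\<Sum>j<N. v $ ((j + N - 1) mod N) * w ^ j) = (\<Sum>j<N. v $ j * w ^ j) * w"
    by (simp add: sum_distrib_right)
  have "(\<Sum>j<N. v $ ((j + 1) mod N) * w ^ j) =
      (\<Sum>j<N. v $ ((j + 1) mod N) * w ^ ((j + 1) mod N) * w ^ (N - 1))"
    by (simp only: shift_succ mult.assoc)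
  also have "\<dots> = (\<Sum>j<N. v $ j * w ^ j * w ^ (N - 1))"
    by (rule sum_lessThan_shift_mod[OF assms(1), of "\<lambda>l. v $ l * w ^ l * w ^ (N - 1)"])
  finally have sum_succ: "(\<Sum>j<N. v $ ((j + 1) mod N) * w ^ j) = (\<Sum>j<N. v $ j * w ^ j) * w ^ (N - 1)"
    by (simp add: sum_distrib_right)
  have "(\<Sum>j<N. (map_mat complex_of_real (cml_matrix N a0 a1 a2) *\<^sub>v v) $ j * w ^ j) =
      of_real a0 * (\<Sum>j<N. v $ ((j + N - 1) mod N) * w ^ j) + of_real a1 * (\<Sum>j<N. v $ j * w ^ j)
      + of_real a2 * (\<Sum>j<N. v $ ((j + 1) mod N) * w ^ j)"
    using assms by (simp add: cml_matrix_mult_vec distrib_right sum.distrib sum_distrib_left mult.assoc)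
  then show ?thesis
    unfolding sum_pred sum_succ power_pred_eq_inverse[OF assms(1,3)] by (simp add: algebra_simps)
qed

lemma eigenvalue_cml_matrix_root_unity:
  assumes "N > 0" "z ^ N = 1"
  shows "eigenvalue (map_mat complex_of_real (cml_matrix N a0 a1 a2))
    (of_real a0 * inverse z + of_real a1 + of_real a2 * z)"
proof -
  have "vec N (\<lambda>j. z ^ j) \<noteq> 0\<^sub>v N"
  proof
    assume "vec N (\<lambda>j. z ^ j) = 0\<^sub>v N"
    then have "vec N (\<lambda>j. z ^ j) $ 0 = 0" using assms by simp
    then show False using assms by simp
  qed
  then show ?thesis
    unfolding eigenvalue_def eigenvector_def
    using cml_matrix_mult_vec_powers[OF assms] cml_matrix_carrier[OF assms(1), of a0 a1 a2]
    by (intro exI[of _ "vec N (\<lambda>j. z ^ j)"]) auto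
qed

lemma eigenvalue_cml_matrix_imp_root_unity:
  assumes "N > 0" and "eigenvalue (map_mat complex_of_real (cml_matrix N a0 a1 a2)) \<mu>"
  shows "\<exists>z. z ^ N = 1 \<and> \<mu> = of_real a0 * inverse z + of_real a1 + of_real a2 * z"
proof (rule ccontr)
  assume no_root: "\<not> ?thesis"
  obtain v where v: "v \<in> carrier_vec N" "v \<noteq> 0\<^sub>v N"
    "map_mat complex_of_real (cml_matrix N a0 a1 a2) *\<^sub>v v = \<mu> \<cdot>\<^sub>v v"
    using assms(2) cml_matrix_carrier[OF assms(1), of a0 a1 a2]
    unfolding eigenvalue_def eigenvector_def by auto
  have power_sum_0: "(\<Sum>j<N. v $ j * w ^ j) = 0" if w: "w ^ N = 1" for w
  proof -
    have "inverse w ^ N = 1"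
      using w by (simp add: power_inverse)
    then have "\<mu> \<noteq> of_real a0 * w + of_real a1 + of_real a2 * inverse w"
      using no_root by force
    moreover have "\<mu> * (\<Sum>j<N. v $ j * w ^ j) =
        (of_real a0 * w + of_real a1 + of_real a2 * inverse w) * (\<Sum>j<N. v $ j * w ^ j)"
      using power_sum_cml_matrix_mult_vec[OF assms(1) v(1) w, of a0 a1 a2] v
      by (simp add: sum_distrib_left mult.assoc)
    ultimately show ?thesis by simp
  qed
  have "v = 0\<^sub>v N"
  proof (rule eq_vecI)
    fix l assume "l < dim_vec (0\<^sub>v N :: complex vec)"
    then show "v $ l = 0\<^sub>v N $ l"
      using coeffs_eq_0_if_power_sums_vanish[of N "{w. w ^ N = 1}" "\<lambda>j. v $ j" l]
        card_roots_unity_eq[OF assms(1)] power_sum_0 by simp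
  qed (use v in simp)
  with v(2) show False ..
qed

lemma eigenvalue_cml_matrix_iff:
  assumes "N > 0"
  shows "eigenvalue (map_mat complex_of_real (cml_matrix N a0 a1 a2)) \<mu> \<longleftrightarrow>
    (\<exists>z. z ^ N = 1 \<and> \<mu> = of_real a0 * inverse z + of_real a1 + of_real a2 * z)"
  using eigenvalue_cml_matrix_imp_root_unity[OF assms] eigenvalue_cml_matrix_root_unity[OF assms]
  by blast

lemma eigenvalue_symmetric_cml_matrix_iff:
  assumes "N > 0"
  shows "eigenvalue (map_mat complex_of_real (cml_matrix N a2 a1 a2)) \<mu> \<longleftrightarrow>
    (\<exists>k<N. \<mu> = of_real (a1 + 2 * a2 * cos (2 * pi * real k / real N)))"
proof -
  have roots: "z ^ N = 1 \<longleftrightarrow> (\<exists>k<N. z = cis (2 * pi * real k / real N))" for z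
  proof -
    \<comment> \<open>qualified: \<open>Complex_Transcendental\<close> has an \<open>exp\<close>-based lemma of the same name\<close>
    have "{z. z ^ N = 1} = (\<lambda>k. cis (2 * pi * real k / real N)) ` {..<N}"
      using Complex.bij_betw_roots_unity[OF assms] by (simp add: bij_betw_def)
    then show ?thesis by (auto simp: set_eq_iff image_iff)
  qed
  have symbol: "of_real a2 * inverse (cis t) + of_real a1 + of_real a2 * cis t =
      complex_of_real (a1 + 2 * a2 * cos t)" for t
    by (simp add: cis_inverse complex_eq_iff)
  show ?thesis
    unfolding eigenvalue_cml_matrix_iff[OF assms] roots
    by (auto simp del: cis_inverse simp add: symbol)
qed

lemma region_R_eq_cos_bounds:
  assumes "N > 0"
  shows "region_R \<alpha> N = {(a2, a1). \<forall>k<N.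
    1 - 2 powr \<alpha> < a1 + 2 * a2 * cos (2 * pi * real k / real N) \<and>
    a1 + 2 * a2 * cos (2 * pi * real k / real N) < 1}"
  unfolding region_R_def eigenvalue_symmetric_cml_matrix_iff[OF assms] by auto

lemma region_R_eq_interior_quadrilateral:
  assumes "N > 0" "m > -1"
    and lower: "\<And>k. k < N \<Longrightarrow> - m \<le> cos (2 * pi * real k / real N)"
    and attained: "\<exists>k<N. cos (2 * pi * real k / real N) = - m"
  shows "region_R \<alpha> N = interior (convex hull {(0, 1),
      (- (2 powr \<alpha> / (2 * (1 + m))), 2 powr \<alpha> / (1 + m) + 1 - 2 powr \<alpha>), (0, 1 - 2 powr \<alpha>),
      (2 powr \<alpha> / (2 * (1 + m)), 1 - 2 powr \<alpha> / (1 + m))})"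
proof -
  define C where "C = (\<lambda>k. cos (2 * pi * real k / real N)) ` {..<N}"
  obtain k where k: "k < N" "cos (2 * pi * real k / real N) = - m"
    using attained by blast
  have C: "C \<subseteq> {- m..1}" "- m \<in> C" "1 \<in> C"
  proof -
    show "C \<subseteq> {- m..1}" using lower by (auto simp: C_def)
    show "- m \<in> C" unfolding C_def using k by (intro image_eqI[of _ _ k]) simp_all
    show "1 \<in> C" unfolding C_def using assms(1) by (intro image_eqI[of _ _ 0]) simp_all
  qed
  have "region_R \<alpha> N = {(a2, a1). \<forall>c\<in>C. 1 - 2 powr \<alpha> < a1 + 2 * a2 * c \<and> a1 + 2 * a2 * c < 1}"
    unfolding region_R_eq_cos_bounds[OF assms(1)] C_def by auto
  also have "\<dots> = {(a2, a1). 1 - 2 powr \<alpha> < a1 + 2 * a2 \<and> a1 + 2 * a2 < 1 \<and>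
      1 - 2 powr \<alpha> < a1 - 2 * m * a2 \<and> a1 - 2 * m * a2 < 1}"
    unfolding affine_in_interval_iff_endpoints[OF C] by (simp add: algebra_simps conj_ac)
  also have "\<dots> = interior (convex hull {(0, 1),
      (- (2 powr \<alpha> / (2 * (1 + m))), 2 powr \<alpha> / (1 + m) + 1 - 2 powr \<alpha>), (0, 1 - 2 powr \<alpha>),
      (2 powr \<alpha> / (2 * (1 + m)), 1 - 2 powr \<alpha> / (1 + m))})"
    using assms(2) by (intro interior_quadrilateral_eq[symmetric]) auto
  finally show ?thesis .
qed

theorem theorem3:
  fixes \<alpha> :: real and N :: nat
  assumes "0 < \<alpha>" and "\<alpha> < 1"
  shows "(even N \<and> N \<ge> 2 \<longrightarrow>
            region_R \<alpha> N = interior (convex hull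
              {(0, 1), (- (2 powr (\<alpha> - 2)), 2 powr (\<alpha> - 1) + 1 - 2 powr \<alpha>),
               (0, 1 - 2 powr \<alpha>), (2 powr (\<alpha> - 2), 1 - 2 powr (\<alpha> - 1))}))
       \<and> (odd N \<and> N \<ge> 3 \<longrightarrow>
            region_R \<alpha> N = interior (convex hull
              {(0, 1),
               (- (2 powr (\<alpha> - 1) / (1 + cos (pi / real N))),
                  2 powr \<alpha> / (1 + cos (pi / real N)) + 1 - 2 powr \<alpha>),
               (0, 1 - 2 powr \<alpha>),
               (2 powr (\<alpha> - 1) / (1 + cos (pi / real N)),
                  1 - 2 powr \<alpha> / (1 + cos (pi / real N)))}))"
proof (intro conjI impI)
  assume N: "even N \<and> N \<ge> 2"
  have "\<exists>k<N. cos (2 * pi * real k / real N) = - 1"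
    using N by (intro exI[of _ "N div 2"]) (simp add: cos_two_pi_div_half_even)
  with N have region: "region_R \<alpha> N = interior (convex hull {(0, 1),
      (- (2 powr \<alpha> / (2 * (1 + 1))), 2 powr \<alpha> / (1 + 1) + 1 - 2 powr \<alpha>), (0, 1 - 2 powr \<alpha>),
      (2 powr \<alpha> / (2 * (1 + 1)), 1 - 2 powr \<alpha> / (1 + 1))})"
    by (intro region_R_eq_interior_quadrilateral) auto
  have "2 powr \<alpha> / (2 * (1 + 1)) = 2 powr (\<alpha> - 2)" "2 powr \<alpha> / (1 + 1) = 2 powr (\<alpha> - 1)"
    by (simp_all add: powr_diff)
  with region show "region_R \<alpha> N = interior (convex hull
      {(0, 1), (- (2 powr (\<alpha> - 2)), 2 powr (\<alpha> - 1) + 1 - 2 powr \<alpha>),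
       (0, 1 - 2 powr \<alpha>), (2 powr (\<alpha> - 2), 1 - 2 powr (\<alpha> - 1))})"
    by (simp only:)
next
  assume N: "odd N \<and> N \<ge> 3"
  then have "pi / real N < pi / 2"
    by (intro divide_strict_left_mono) auto
  then have "cos (pi / real N) > 0"
    using N by (intro cos_gt_zero_pi) (auto intro: less_trans[of _ 0])
  moreover have "\<exists>k<N. cos (2 * pi * real k / real N) = - cos (pi / real N)"
    using N by (intro exI[of _ "N div 2"]) (simp add: cos_two_pi_div_half_odd)
  ultimately have "region_R \<alpha> N = interior (convex hull {(0, 1),
      (- (2 powr \<alpha> / (2 * (1 + cos (pi / real N)))),
        2 powr \<alpha> / (1 + cos (pi / real N)) + 1 - 2 powr \<alpha>), (0, 1 - 2 powr \<alpha>),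
      (2 powr \<alpha> / (2 * (1 + cos (pi / real N))), 1 - 2 powr \<alpha> / (1 + cos (pi / real N)))})"
    using N by (intro region_R_eq_interior_quadrilateral) (auto simp: cos_two_pi_div_ge_neg_cos_pi_div)
  then show "region_R \<alpha> N = interior (convex hull
      {(0, 1),
       (- (2 powr (\<alpha> - 1) / (1 + cos (pi / real N))),
          2 powr \<alpha> / (1 + cos (pi / real N)) + 1 - 2 powr \<alpha>),
       (0, 1 - 2 powr \<alpha>),
       (2 powr (\<alpha> - 1) / (1 + cos (pi / real N)),
          1 - 2 powr \<alpha> / (1 + cos (pi / real N)))})"
    by (simp add: powr_diff)
qed

end
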